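(* Let $\widehat Z\in\mathbb C^{dn_1\times dn_2}$ be a fixed block diagonal matrix and let $\Omega$ follow the Bernoulli model with parameter $p\in(0,1]$. Then with high probability $$\Big\|\Big(\tfrac1p\widehat{\mathcal G}\mathcal P_\Omega\widehat{\mathcal G}^*-\widehat{\mathcal G}\widehat{\mathcal G}^*\Big)\widehat Z\Big\|\le C\Big(\sqrt{\tfrac{\log(dn)}{p}}\,\|\widehat Z\|_{\widehat{\mathcal G},F}+\tfrac{\log(dn)}{p}\,\|\widehat Z\|_{\widehat{\mathcal G},\infty}\Big),$$ where $\|\cdot\|$ is the spectral norm and $C>0$ is an absolute constant.
   Context: Let $d,n\ge1$ with $n$ odd and $n_1=n_2=(n+1)/2$. For $a\in[n]$, $w_a=\#\{(j,k)\in[n_1]\times[n_2]:j+k=a+1\}$, $G_a=w_a^{-1/2}\sum_{j+k=a+1}e_je_k^{\mathsf T}$, $\mathcal G(x)=\sum_ax_aG_a$. $F$ is the $d\times d$ unitary DFT matrix. $\widehat{\mathcal G}$ maps $X\in\mathbb C^{d\times n}$ to the block diagonal matrix ($d$ blocks of size $n_1\times n_2$) whose $i$-th block is $\mathcal G$ of the $i$-th row of $FX$; $\widehat{\mathcal G}^*$ is its adjoint w.r.t. $\langle A,B\rangle=\mathrm{tr}(AB^{\mathsf H})$. $\widehat G_{j,k}=\widehat{\mathcal G}(e_je_k^{\mathsf T})=\mathrm{diag}(F_{1j}G_k,\dots,F_{dj}G_k)$. $\|\widehat Z\|_{\widehat{\mathcal G},F}=\big(\sum_{(j,k)\in[d]\times[n]}\frac1{dw_k}|\langle\widehat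 Z,\widehat G_{j,k}\rangle|^2\big)^{1/2}$ and $\|\widehat Z\|_{\widehat{\mathcal G},\infty}=\max_{(j,k)}\frac1{\sqrt{dw_k}}|\langle\widehat Z,\widehat G_{j,k}\rangle|$. $\mathcal P_\Omega$ keeps entries in $\Omega$ and zeroes the rest; Bernoulli model: each index in $\Omega$ independently with probability $p$. "With high probability": probability at least $1-c_1(dn)^{-c_2}$ for absolute constants $c_1,c_2>0$. *)

theory Defs
  imports "HOL-Probability.Probability"
begin

text \<open>All indices are 0-based: rows/columns of a d x n matrix are l < d, a < n;
  n1 = n2 = (n+1)/2; the Hankel index condition j+k=a+1 (1-based) becomes j+k=a (0-based).
  Matrices are functions nat => nat => complex, with explicit dimensions.\<close>

definition hn :: "nat \<Rightarrow> nat" where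
  "hn n = (n + 1) div 2"

definition wt :: "nat \<Rightarrow> nat \<Rightarrow> nat" where
  "wt n a = card {(j, k). j < hn n \<and> k < hn n \<and> j + k = a}"

definition Gmat :: "nat \<Rightarrow> nat \<Rightarrow> nat \<Rightarrow> nat \<Rightarrow> complex" where
  "Gmat n a j k = (if j + k = a then complex_of_real (1 / sqrt (real (wt n a))) else 0)"

definition hankel :: "nat \<Rightarrow> (nat \<Rightarrow> complex) \<Rightarrow> nat \<Rightarrow> nat \<Rightarrow> complex" where
  "hankel n x j k = (\<Sum>a<n. x a * Gmat n a j k)"

definition dft :: "nat \<Rightarrow> nat \<Rightarrow> nat \<Rightarrow> complex" where
  "dft d i l = cis (- 2 * pi * real (i * l) / real d) / complex_of_real (sqrt (real d))"

text \<open>The operator Ghat: d x n matrix to block-diagonal (d n1) x (d n2) matrix.\<close>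
definition Ghat :: "nat \<Rightarrow> nat \<Rightarrow> (nat \<Rightarrow> nat \<Rightarrow> complex) \<Rightarrow> nat \<Rightarrow> nat \<Rightarrow> complex" where
  "Ghat d n X r c =
     (if r div hn n = c div hn n
      then hankel n (\<lambda>a. \<Sum>l<d. dft d (r div hn n) l * X l a) (r mod hn n) (c mod hn n)
      else 0)"

text \<open>Its adjoint w.r.t. the trace inner product (explicit formula).\<close>
definition Ghat_adj :: "nat \<Rightarrow> nat \<Rightarrow> (nat \<Rightarrow> nat \<Rightarrow> complex) \<Rightarrow> nat \<Rightarrow> nat \<Rightarrow> complex" where
  "Ghat_adj d n Y l a =
     (\<Sum>i<d. cnj (dft d i l) *
        (\<Sum>j<hn n. \<Sum>k<hn n. Gmat n a j k * Y (i * hn n + j) (i * hn n + k)))"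

definition mat_inner :: "nat \<Rightarrow> nat \<Rightarrow> (nat \<Rightarrow> nat \<Rightarrow> complex) \<Rightarrow> (nat \<Rightarrow> nat \<Rightarrow> complex) \<Rightarrow> complex" where
  "mat_inner m k A B = (\<Sum>r<m. \<Sum>c<k. A r c * cnj (B r c))"

definition Ghat_basis :: "nat \<Rightarrow> nat \<Rightarrow> nat \<Rightarrow> nat \<Rightarrow> nat \<Rightarrow> nat \<Rightarrow> complex" where
  "Ghat_basis d n j k = Ghat d n (\<lambda>l a. if l = j \<and> a = k then 1 else 0)"

definition coef :: "nat \<Rightarrow> nat \<Rightarrow> (nat \<Rightarrow> nat \<Rightarrow> complex) \<Rightarrow> nat \<Rightarrow> nat \<Rightarrow> real" where
  "coef d n Z j k = cmod (mat_inner (d * hn n) (d * hn n) Z (Ghat_basis d n j k))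
                     / sqrt (real d * real (wt n k))"

definition normGF :: "nat \<Rightarrow> nat \<Rightarrow> (nat \<Rightarrow> nat \<Rightarrow> complex) \<Rightarrow> real" where
  "normGF d n Z = sqrt (\<Sum>j<d. \<Sum>k<n. (coef d n Z j k)\<^sup>2)"

definition normGinf :: "nat \<Rightarrow> nat \<Rightarrow> (nat \<Rightarrow> nat \<Rightarrow> complex) \<Rightarrow> real" where
  "normGinf d n Z = Max {coef d n Z j k | j k. j < d \<and> k < n}"

definition vec_norm :: "nat \<Rightarrow> (nat \<Rightarrow> complex) \<Rightarrow> real" where
  "vec_norm k v = sqrt (\<Sum>c<k. (cmod (v c))\<^sup>2)"

definition spec_norm :: "nat \<Rightarrow> nat \<Rightarrow> (nat \<Rightarrow> nat \<Rightarrow> complex) \<Rightarrow> real" where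
  "spec_norm m k A = Sup {vec_norm m (\<lambda>r. \<Sum>c<k. A r c * v c) | v. vec_norm k v \<le> 1}"

definition block_diag :: "nat \<Rightarrow> nat \<Rightarrow> (nat \<Rightarrow> nat \<Rightarrow> complex) \<Rightarrow> bool" where
  "block_diag d n Z \<longleftrightarrow>
     (\<forall>r < d * hn n. \<forall>c < d * hn n. r div hn n \<noteq> c div hn n \<longrightarrow> Z r c = 0)"

text \<open>P_Omega, with Omega = {(l,a). S (l,a)} for an indicator S.\<close>
definition P_Omega :: "(nat \<times> nat \<Rightarrow> bool) \<Rightarrow> (nat \<Rightarrow> nat \<Rightarrow> complex) \<Rightarrow> nat \<Rightarrow> nat \<Rightarrow> complex" where
  "P_Omega S X l a = (if S (l, a) then X l a else 0)"

definition bernoulli_model :: "nat \<Rightarrow> nat \<Rightarrow> real \<Rightarrow> (nat \<times> nat \<Rightarrow> bool) pmf" where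
  "bernoulli_model d n p = Pi_pmf ({..<d} \<times> {..<n}) False (\<lambda>_. bernoulli_pmf p)"

definition deviation :: "nat \<Rightarrow> nat \<Rightarrow> real \<Rightarrow> (nat \<times> nat \<Rightarrow> bool) \<Rightarrow> (nat \<Rightarrow> nat \<Rightarrow> complex) \<Rightarrow> nat \<Rightarrow> nat \<Rightarrow> complex" where
  "deviation d n p S Z r c =
     complex_of_real (1 / p) * Ghat d n (P_Omega S (Ghat_adj d n Z)) r c - Ghat d n (Ghat_adj d n Z) r c"

end

theory Submission
  imports Defs
begin

text \<open>The deviation operator maps each diagonal block to a Hankel matrix generated by a
  sequence of length n = 2 hn n - 1. Embedding that Hankel matrix into a circulant one of
  size n bounds its spectral norm by the largest discrete Fourier coefficient of the
  sequence. Each Fourier coefficient is a sum of independent, centred, bounded Bernoulli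
  terms whose variance is controlled by the norm normGF and whose range by normGinf, so a
  Bernstein inequality makes it large with probability at most (d n)^-2. A union bound over
  the d n coefficients, with real and imaginary parts of either sign, gives failure
  probability 4/(d n).\<close>

text \<open>The centred factor by which (1/p) P_Omega - Id scales an entry.\<close>

definition bernoulli_dev :: "real \<Rightarrow> bool \<Rightarrow> real" where
  "bernoulli_dev p v = (if v then 1 / p - 1 else -1)"

lemma exp_le_quadratic:
  fixes x :: real
  assumes "x \<le> 1"
  shows "exp x \<le> 1 + x + x\<^sup>2"
proof (cases "0 \<le> x")
  case True
  then show ?thesis using exp_bound assms by blast
next
  case False
  define y where "y = -x"
  have y: "0 < y" using False y_def by simp
  have "exp x \<le> 1 / (1 + y)"
    using exp_ge_add_one_self[of y] y by (simp add: y_def exp_minus field_simps)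
  also have "\<dots> \<le> 1 - y + y\<^sup>2"
  proof -
    have "1 \<le> (1 + y) * (1 - y + y\<^sup>2)"
      using y by (simp add: algebra_simps power2_eq_square power3_eq_cube)
    then show ?thesis using y by (simp add: field_simps)
  qed
  finally show ?thesis by (simp add: y_def)
qed

lemma bernoulli_dev_mgf_le:
  fixes p B lam beta :: real
  assumes p: "0 < p" "p \<le> 1" and beta: "\<bar>beta\<bar> \<le> B" and lam: "0 \<le> lam" "lam * B \<le> p"
  shows "measure_pmf.expectation (bernoulli_pmf p) (\<lambda>v. exp (lam * (bernoulli_dev p v * beta)))
           \<le> exp (lam\<^sup>2 * beta\<^sup>2 / p)"
proof -
  define x1 where "x1 = lam * ((1 / p - 1) * beta)"
  define x2 where "x2 = lam * (- beta)"
  have lam_beta: "lam * \<bar>beta\<bar> \<le> p"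
    using beta lam by (meson mult_left_mono order_trans)
  have "x1 \<le> \<bar>x1\<bar>" by simp
  also have "\<bar>x1\<bar> = (1 / p - 1) * (lam * \<bar>beta\<bar>)"
    using p lam unfolding x1_def by (simp add: abs_mult)
  also have "\<dots> \<le> (1 / p - 1) * p"
    using lam_beta p by (intro mult_left_mono) (auto simp: field_simps)
  also have "\<dots> \<le> 1" using p by (simp add: field_simps)
  finally have x1: "x1 \<le> 1" .
  have "x2 \<le> lam * \<bar>beta\<bar>"
    unfolding x2_def using lam mult_left_mono[of "-beta" "\<bar>beta\<bar>" lam] by simp
  then have x2: "x2 \<le> 1" using lam_beta p by simp
  have "measure_pmf.expectation (bernoulli_pmf p) (\<lambda>v. exp (lam * (bernoulli_dev p v * beta)))
        = exp x1 * p + exp x2 * (1 - p)"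
    using p by (simp add: bernoulli_dev_def x1_def x2_def)
  also have "\<dots> \<le> (1 + x1 + x1\<^sup>2) * p + (1 + x2 + x2\<^sup>2) * (1 - p)"
    using p exp_le_quadratic[OF x1] exp_le_quadratic[OF x2]
    by (intro add_mono mult_right_mono) auto
  also have "\<dots> = 1 + lam\<^sup>2 * beta\<^sup>2 * (1 - p) / p"
    using p unfolding x1_def x2_def by (simp add: field_simps power2_eq_square)
  also have "\<dots> \<le> 1 + lam\<^sup>2 * beta\<^sup>2 / p"
    using p by (intro add_left_mono divide_right_mono) (auto simp: mult_left_le)
  also have "\<dots> \<le> exp (lam\<^sup>2 * beta\<^sup>2 / p)"
    by (rule exp_ge_add_one_self)
  finally show ?thesis .
qed

lemma integrable_bernoulli_pmf: "integrable (measure_pmf (bernoulli_pmf p)) (f :: bool \<Rightarrow> real)"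
  by (rule integrable_measure_pmf_finite) (rule finite_subset[of _ UNIV], auto)

lemma bernoulli_dev_sum_tail_mgf:
  fixes I :: "'a set" and beta :: "'a \<Rightarrow> real"
  assumes I: "finite I" and p: "0 < p" "p \<le> 1" and beta: "\<And>x. x \<in> I \<Longrightarrow> \<bar>beta x\<bar> \<le> B"
    and lam: "0 < lam" "lam * B \<le> p"
  shows "measure_pmf.prob (Pi_pmf I False (\<lambda>_. bernoulli_pmf p))
           {S. t < (\<Sum>x\<in>I. bernoulli_dev p (S x) * beta x)}
         \<le> exp (- lam * t + lam\<^sup>2 * (\<Sum>x\<in>I. (beta x)\<^sup>2) / p)"
proof -
  define M where "M = Pi_pmf I False (\<lambda>_. bernoulli_pmf p)"
  define f where "f x v = exp (lam * (bernoulli_dev p v * beta x))" for x v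
  define u where "u S = (\<Prod>x\<in>I. f x (S x))" for S
  have u_eq: "u S = exp (lam * (\<Sum>x\<in>I. bernoulli_dev p (S x) * beta x))" for S
    unfolding u_def f_def using I by (simp add: sum_distrib_left exp_sum)
  have integrable_u: "integrable (measure_pmf M) u"
    unfolding M_def u_def by (rule integrable_prod_Pi_pmf[OF I]) (rule integrable_bernoulli_pmf)
  have "{S. t < (\<Sum>x\<in>I. bernoulli_dev p (S x) * beta x)}
          \<subseteq> {S \<in> space (measure_pmf M). exp (lam * t) \<le> u S}"
    using lam by (auto simp: u_eq)
  then have "measure_pmf.prob M {S. t < (\<Sum>x\<in>I. bernoulli_dev p (S x) * beta x)}
        \<le> measure_pmf.prob M {S \<in> space (measure_pmf M). exp (lam * t) \<le> u S}"
    by (rule measure_pmf.finite_measure_mono) simp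
  also have "\<dots> \<le> measure_pmf.expectation M u / exp (lam * t)"
    by (rule integral_Markov_inequality_measure[OF integrable_u, of UNIV])
       (auto simp: u_def f_def intro!: prod_nonneg)
  also have "measure_pmf.expectation M u = (\<Prod>x\<in>I. measure_pmf.expectation (bernoulli_pmf p) (f x))"
    unfolding M_def u_def
    by (rule expectation_prod_Pi_pmf[OF I]) (auto simp: f_def intro: integrable_bernoulli_pmf)
  also have "\<dots> \<le> (\<Prod>x\<in>I. exp (lam\<^sup>2 * (beta x)\<^sup>2 / p))"
  proof (rule prod_mono, safe)
    fix x assume "x \<in> I"
    show "0 \<le> measure_pmf.expectation (bernoulli_pmf p) (f x)"
      by (rule integral_nonneg_AE) (auto simp: f_def)
    show "measure_pmf.expectation (bernoulli_pmf p) (f x) \<le> exp (lam\<^sup>2 * (beta x)\<^sup>2 / p)"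
      unfolding f_def by (rule bernoulli_dev_mgf_le[OF p beta[OF \<open>x \<in> I\<close>]]) (use lam in auto)
  qed
  also have "\<dots> = exp (lam\<^sup>2 * (\<Sum>x\<in>I. (beta x)\<^sup>2) / p)"
    using I by (simp add: exp_sum sum_distrib_left sum_divide_distrib)
  finally show ?thesis
    unfolding M_def by (simp add: divide_right_mono exp_diff[symmetric])
qed

lemma bernstein_exponent_choice:
  fixes p B V L t :: real
  assumes p: "0 < p" and B: "0 < B" and V: "0 \<le> V" and L: "0 < L"
    and t_var: "2 * sqrt (L * V / p) \<le> t" and t_range: "2 * L * B / p \<le> t"
  obtains lam where "0 < lam" "lam * B \<le> p" "- lam * t + lam\<^sup>2 * V / p \<le> - L"
proof (cases "2 * V \<le> t * B")
  case True
  have "(p / B)\<^sup>2 * V / p \<le> p * t / (2 * B)"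
    using True p B by (simp add: power2_eq_square field_simps mult_left_mono)
  moreover have "L \<le> p * t / (2 * B)"
    using t_range p B by (simp add: field_simps)
  ultimately have "- (p / B) * t + (p / B)\<^sup>2 * V / p \<le> - L"
    by (simp add: field_simps)
  then show ?thesis using that[of "p / B"] p B by simp
next
  case False
  have t: "0 < t" using t_range L B p by (smt (verit) divide_pos_pos mult_pos_pos)
  then have V_pos: "0 < V" using False B V by (smt (verit) mult_pos_pos)
  have "(2 * sqrt (L * V / p))\<^sup>2 \<le> t\<^sup>2"
    using t_var L V p by (intro power_mono) auto
  then have t_sq: "4 * L * V / p \<le> t\<^sup>2"
    using L V p by (simp add: power_mult_distrib)
  define lam where "lam = t * p / (2 * V)"
  have "lam * B = p * (t * B) / (2 * V)" unfolding lam_def by (simp add: field_simps)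
  also have "\<dots> \<le> p" using False p V_pos by (simp add: field_simps)
  finally have "lam * B \<le> p" .
  moreover have "- lam * t + lam\<^sup>2 * V / p = - (t\<^sup>2 * p / (4 * V))"
    unfolding lam_def using V_pos p by (simp add: power2_eq_square field_simps)
  moreover have "L \<le> t\<^sup>2 * p / (4 * V)"
    using t_sq V_pos p by (simp add: field_simps)
  moreover have "0 < lam" unfolding lam_def using t p V_pos by simp
  ultimately show ?thesis using that[of lam] by simp
qed

lemma bernoulli_dev_sum_tail:
  fixes I :: "'a set" and beta :: "'a \<Rightarrow> real"
  assumes I: "finite I" and p: "0 < p" "p \<le> 1" and beta: "\<And>x. x \<in> I \<Longrightarrow> \<bar>beta x\<bar> \<le> B"
    and B: "0 \<le> B" and L: "0 < L"
    and t_var: "2 * sqrt (L * (\<Sum>x\<in>I. (beta x)\<^sup>2) / p) \<le> t" and t_range: "2 * L * B / p \<le> t"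
  shows "measure_pmf.prob (Pi_pmf I False (\<lambda>_. bernoulli_pmf p))
           {S. t < (\<Sum>x\<in>I. bernoulli_dev p (S x) * beta x)} \<le> exp (- L)"
proof (cases "B = 0")
  case True
  then have "beta x = 0" if "x \<in> I" for x using beta[OF that] by simp
  then have "{S. t < (\<Sum>x\<in>I. bernoulli_dev p (S x) * beta x)} = {}"
    using t_range True by auto
  then show ?thesis by simp
next
  case False
  obtain lam where lam: "0 < lam" "lam * B \<le> p"
      and exponent: "- lam * t + lam\<^sup>2 * (\<Sum>x\<in>I. (beta x)\<^sup>2) / p \<le> - L"
  proof (rule bernstein_exponent_choice[OF p(1) _ _ L t_var t_range])
    show "0 < B" using False B by simp
    show "0 \<le> (\<Sum>x\<in>I. (beta x)\<^sup>2)" by (simp add: sum_nonneg)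
  qed
  have "measure_pmf.prob (Pi_pmf I False (\<lambda>_. bernoulli_pmf p))
           {S. t < (\<Sum>x\<in>I. bernoulli_dev p (S x) * beta x)}
        \<le> exp (- lam * t + lam\<^sup>2 * (\<Sum>x\<in>I. (beta x)\<^sup>2) / p)"
    by (rule bernoulli_dev_sum_tail_mgf[OF I p beta lam])
  also have "\<dots> \<le> exp (- L)"
    using exponent by simp
  finally show ?thesis .
qed

definition fourier_kernel :: "nat \<Rightarrow> nat \<Rightarrow> nat \<Rightarrow> complex" where
  "fourier_kernel n t s = cis (2 * pi * real (t * s) / real n)"

lemma fourier_kernel_commute: "fourier_kernel n t s = fourier_kernel n s t"
  by (simp add: fourier_kernel_def mult.commute)

lemma fourier_kernel_add: "fourier_kernel n t (j + k) = fourier_kernel n t j * fourier_kernel n t k"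
  by (simp add: fourier_kernel_def cis_mult add_divide_distrib distrib_left algebra_simps)

lemma sum_cis_root_powers_eq_0:
  fixes k :: int
  assumes n: "0 < n" and k: "k \<noteq> 0" "\<bar>k\<bar> < int n"
  shows "(\<Sum>j<n. cis (2 * pi * real_of_int k / real n) ^ j) = 0"
proof -
  define z where "z = cis (2 * pi * real_of_int k / real n)"
  have "z ^ n = cis (2 * pi * real_of_int k)"
    using n unfolding z_def Complex.DeMoivre by simp
  then have z_pow: "z ^ n = 1"
    by (simp add: cis_multiple_2pi)
  have "z \<noteq> 1"
  proof
    assume "z = 1"
    then have "cos (2 * pi * real_of_int k / real n) = 1"
      unfolding z_def by (metis cis.sel(1) one_complex.sel(1))
    then obtain N :: int where "2 * pi * real_of_int k / real n = real_of_int N * 2 * pi"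
      using cos_one_2pi_int[THEN iffD1] by blast
    then have "real_of_int k = N * real n" using n by (simp add: field_simps)
    then have k_eq: "k = N * int n" by (metis of_int_eq_iff of_int_mult of_int_of_nat_eq)
    then have "N \<noteq> 0" using k by auto
    then have "1 * int n \<le> \<bar>N\<bar> * int n" by (intro mult_right_mono) auto
    then show False using k k_eq by (simp add: abs_mult)
  qed
  then show ?thesis unfolding z_def[symmetric] using z_pow by (simp add: sum_gp_strict)
qed

lemma fourier_kernel_orthogonal:
  assumes n: "0 < n" and t: "t < n" "t' < n"
  shows "(\<Sum>j<n. fourier_kernel n t' j * cnj (fourier_kernel n t j)) = (if t = t' then of_nat n else 0)"
proof (cases "t = t'")
  case True
  then show ?thesis by (simp add: fourier_kernel_def cis_cnj cis_mult)
next
  case False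
  define k :: int where "k = int t' - int t"
  have "fourier_kernel n t' j * cnj (fourier_kernel n t j) = cis (2 * pi * real_of_int k / real n) ^ j" for j
  proof -
    have "fourier_kernel n t' j * cnj (fourier_kernel n t j) = cis (real j * (2 * pi * real_of_int k / real n))"
      unfolding fourier_kernel_def k_def cis_cnj cis_mult
      by (rule arg_cong[where f = cis]) (use n in \<open>simp add: field_simps of_nat_mult of_int_diff\<close>)
    then show ?thesis by (simp only: Complex.DeMoivre)
  qed
  then have "(\<Sum>j<n. fourier_kernel n t' j * cnj (fourier_kernel n t j))
           = (\<Sum>j<n. cis (2 * pi * real_of_int k / real n) ^ j)" by simp
  also have "\<dots> = 0"
    by (rule sum_cis_root_powers_eq_0) (use n t False in \<open>auto simp: k_def\<close>)
  finally show ?thesis using False by simp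
qed

lemma of_real_cmod_sq: "complex_of_real ((cmod z)\<^sup>2) = z * cnj z"
  by (simp add: complex_mult_cnj cmod_power2)

lemma fourier_parseval:
  assumes m: "m \<le> n" and n: "0 < n"
  shows "(\<Sum>j<n. (cmod (\<Sum>t<m. c t * cnj (fourier_kernel n t j)))\<^sup>2) = real n * (\<Sum>t<m. (cmod (c t))\<^sup>2)"
proof -
  let ?e = "fourier_kernel n"
  have "complex_of_real (\<Sum>j<n. (cmod (\<Sum>t<m. c t * cnj (?e t j)))\<^sup>2)
      = (\<Sum>j<n. (\<Sum>t<m. c t * cnj (?e t j)) * cnj (\<Sum>t'<m. c t' * cnj (?e t' j)))"
    by (simp only: of_real_sum of_real_cmod_sq)
  also have "\<dots> = (\<Sum>j<n. \<Sum>t<m. \<Sum>t'<m. c t * cnj (c t') * (?e t' j * cnj (?e t j)))"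
    by (simp add: sum_distrib_left sum_distrib_right mult_ac) (rule sum.cong[OF refl], rule sum.swap)
  also have "\<dots> = (\<Sum>t<m. \<Sum>t'<m. c t * cnj (c t') * (\<Sum>j<n. ?e t' j * cnj (?e t j)))"
    by (subst sum.swap, rule sum.cong[OF refl], subst sum.swap) (simp add: sum_distrib_left)
  also have "\<dots> = (\<Sum>t<m. c t * cnj (c t) * of_nat n)"
    using m n by (intro sum.cong refl) (simp add: fourier_kernel_orthogonal if_distrib cong: if_cong)
  also have "\<dots> = complex_of_real (real n * (\<Sum>t<m. (cmod (c t))\<^sup>2))"
    by (simp only: of_real_mult of_real_sum of_real_cmod_sq sum_distrib_left mult_ac of_real_of_nat_eq)
  finally show ?thesis using of_real_eq_iff by blast
qed

lemma fourier_inversion: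
  assumes n: "0 < n" and s: "s < n"
  shows "h s = (1 / of_nat n) *
           (\<Sum>t<n. (\<Sum>s'<n. h s' * fourier_kernel n t s') * cnj (fourier_kernel n t s))"
proof -
  let ?e = "fourier_kernel n"
  have "(\<Sum>t<n. (\<Sum>s'<n. h s' * ?e t s') * cnj (?e t s))
      = (\<Sum>t<n. \<Sum>s'<n. h s' * (?e t s' * cnj (?e t s)))"
    by (simp add: sum_distrib_right sum_distrib_left mult_ac)
  also have "\<dots> = (\<Sum>s'<n. h s' * (\<Sum>t<n. ?e s' t * cnj (?e s t)))"
    by (subst sum.swap) (simp add: sum_distrib_left fourier_kernel_commute)
  also have "\<dots> = h s * of_nat n"
    using n s by (simp add: fourier_kernel_orthogonal if_distrib cong: if_cong)
  finally show ?thesis using n by simp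
qed

text \<open>A Hankel matrix of size m is a corner of a circulant matrix of size n = 2 m - 1,
  which the discrete Fourier transform diagonalises.\<close>

lemma hankel_eq_inverse_fourier:
  assumes n: "n = 2 * m - 1" and j: "j < m"
  shows "(\<Sum>k<m. h (j + k) * u k) = (1 / of_nat n) *
           (\<Sum>t<n. ((\<Sum>s<n. h s * fourier_kernel n t s) * (\<Sum>k<m. u k * cnj (fourier_kernel n t k)))
                   * cnj (fourier_kernel n t j))"
proof -
  let ?e = "fourier_kernel n"
  let ?h = "\<lambda>t. \<Sum>s<n. h s * ?e t s"
  have "(\<Sum>k<m. h (j + k) * u k) = (\<Sum>k<m. ((1 / of_nat n) * (\<Sum>t<n. ?h t * cnj (?e t (j + k)))) * u k)"
    using j n by (intro sum.cong refl) (subst fourier_inversion[where n = n], auto)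
  also have "\<dots> = (1 / of_nat n) * (\<Sum>k<m. \<Sum>t<n. ?h t * cnj (?e t j) * (u k * cnj (?e t k)))"
    by (simp add: fourier_kernel_add sum_distrib_left sum_distrib_right mult_ac)
  also have "\<dots> = (1 / of_nat n) * (\<Sum>t<n. (?h t * (\<Sum>k<m. u k * cnj (?e t k))) * cnj (?e t j))"
    by (subst sum.swap) (simp add: sum_distrib_left mult_ac)
  finally show ?thesis .
qed

lemma hankel_sum_sq_le:
  assumes m: "0 < m" and n: "n = 2 * m - 1"
    and M: "\<And>t. t < n \<Longrightarrow> cmod (\<Sum>s<n. h s * fourier_kernel n t s) \<le> M"
  shows "(\<Sum>j<m. (cmod (\<Sum>k<m. h (j + k) * u k))\<^sup>2) \<le> M\<^sup>2 * (\<Sum>k<m. (cmod (u k))\<^sup>2)"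
proof -
  let ?e = "fourier_kernel n"
  define H where "H t = (\<Sum>s<n. h s * ?e t s)" for t
  define U where "U t = (\<Sum>k<m. u k * cnj (?e t k))" for t
  have n_pos: "0 < n" and m_le: "m \<le> n" using m n by auto
  have "(\<Sum>k<m. h (j + k) * u k) = (1 / of_nat n) * (\<Sum>t<n. (H t * U t) * cnj (?e t j))"
    if "j < m" for j
    unfolding H_def U_def using that by (rule hankel_eq_inverse_fourier[OF n])
  then have "(\<Sum>j<m. (cmod (\<Sum>k<m. h (j + k) * u k))\<^sup>2)
      = (\<Sum>j<m. (cmod ((1 / of_nat n) * (\<Sum>t<n. (H t * U t) * cnj (?e t j))))\<^sup>2)"
    by simp
  also have "\<dots> \<le> (\<Sum>j<n. (cmod ((1 / of_nat n) * (\<Sum>t<n. (H t * U t) * cnj (?e t j))))\<^sup>2)"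
    by (rule sum_mono2) (use m_le in auto)
  also have "\<dots> = (\<Sum>j<n. (1 / real n)\<^sup>2 * (cmod (\<Sum>t<n. (H t * U t) * cnj (?e t j)))\<^sup>2)"
    by (simp only: norm_mult power_mult_distrib norm_divide norm_one norm_of_nat)
  also have "\<dots> = (1 / real n)\<^sup>2 * (\<Sum>j<n. (cmod (\<Sum>t<n. (H t * U t) * cnj (?e t j)))\<^sup>2)"
    by (rule sum_distrib_left[symmetric])
  also have "\<dots> = (1 / real n)\<^sup>2 * (real n * (\<Sum>t<n. (cmod (H t * U t))\<^sup>2))"
    by (simp only: fourier_parseval[OF order_refl n_pos])
  also have "\<dots> \<le> (1 / real n)\<^sup>2 * (real n * (\<Sum>t<n. M\<^sup>2 * (cmod (U t))\<^sup>2))"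
  proof -
    have "(cmod (H t))\<^sup>2 \<le> M\<^sup>2" if "t < n" for t
      using M[OF that] unfolding H_def by (intro power_mono) auto
    then show ?thesis
      by (intro mult_left_mono sum_mono) (auto simp: norm_mult power_mult_distrib mult_right_mono)
  qed
  also have "(\<Sum>t<n. M\<^sup>2 * (cmod (U t))\<^sup>2) = M\<^sup>2 * (real n * (\<Sum>k<m. (cmod (u k))\<^sup>2))"
  proof -
    have "U t = (\<Sum>k<m. u k * cnj (?e k t))" for t
      unfolding U_def by (simp only: fourier_kernel_commute[of n t])
    then show ?thesis
      by (simp only: sum_distrib_left[symmetric] fourier_parseval[OF m_le n_pos])
  qed
  also have "(1 / real n)\<^sup>2 * (real n * (M\<^sup>2 * (real n * (\<Sum>k<m. (cmod (u k))\<^sup>2))))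
      = M\<^sup>2 * (\<Sum>k<m. (cmod (u k))\<^sup>2)"
    using n_pos by (simp add: power2_eq_square)
  finally show ?thesis .
qed

lemma spec_norm_le:
  assumes M: "0 \<le> M"
    and bound: "\<And>v. (\<Sum>r<m. (cmod (\<Sum>c<k. A r c * v c))\<^sup>2) \<le> M\<^sup>2 * (\<Sum>c<k. (cmod (v c))\<^sup>2)"
  shows "spec_norm m k A \<le> M"
  unfolding spec_norm_def
proof (rule cSup_least)
  have "vec_norm k (\<lambda>_. 0) \<le> 1" by (simp add: vec_norm_def)
  then show "{vec_norm m (\<lambda>r. \<Sum>c<k. A r c * v c) |v. vec_norm k v \<le> 1} \<noteq> {}" by blast
next
  fix x assume "x \<in> {vec_norm m (\<lambda>r. \<Sum>c<k. A r c * v c) |v. vec_norm k v \<le> 1}"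
  then obtain v where x: "x = vec_norm m (\<lambda>r. \<Sum>c<k. A r c * v c)" and v: "vec_norm k v \<le> 1"
    by blast
  have "x\<^sup>2 = (\<Sum>r<m. (cmod (\<Sum>c<k. A r c * v c))\<^sup>2)"
    unfolding x vec_norm_def by (simp add: sum_nonneg)
  also have "\<dots> \<le> M\<^sup>2 * (\<Sum>c<k. (cmod (v c))\<^sup>2)"
    by (rule bound)
  also have "\<dots> \<le> M\<^sup>2 * 1"
    using v unfolding vec_norm_def by (intro mult_left_mono) (simp_all add: sum_nonneg)
  finally have "x\<^sup>2 \<le> M\<^sup>2" by simp
  moreover have "0 \<le> x" unfolding x vec_norm_def by (simp add: sum_nonneg)
  ultimately show "x \<le> M" using M by (simp add: power2_le_iff_abs_le)
qed

lemma sum_block_decomp: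
  fixes f :: "nat \<Rightarrow> 'a::comm_monoid_add"
  shows "(\<Sum>r<d * m. f r) = (\<Sum>i<d. \<Sum>j<m. f (i * m + j))"
proof -
  have "(\<Sum>r<d * m. f r) = (\<Sum>i<d. sum f {i * m..<i * m + m})"
    by (rule sum.nat_group[symmetric])
  also have "\<dots> = (\<Sum>i<d. \<Sum>j<m. f (i * m + j))"
    by (simp add: sum.shift_bounds_nat_ivl[of f 0 "i * m" m for i, simplified]
          add.commute atLeast0LessThan)
  finally show ?thesis .
qed

lemma block_index_div [simp]: "j < m \<Longrightarrow> (i * m + j) div m = (i :: nat)"
  by (simp add: add.commute)

lemma block_index_mod [simp]: "j < m \<Longrightarrow> (i * m + j) mod m = (j :: nat)"
  by (simp add: add.commute)

lemma hn_pos: "odd n \<Longrightarrow> 0 < hn n"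
  by (simp add: hn_def)

lemma odd_eq_2_hn_minus_1: "odd n \<Longrightarrow> n = 2 * hn n - 1"
  by (simp add: hn_def)

definition dev_seq ::
    "nat \<Rightarrow> nat \<Rightarrow> real \<Rightarrow> (nat \<times> nat \<Rightarrow> bool) \<Rightarrow> (nat \<Rightarrow> nat \<Rightarrow> complex) \<Rightarrow> nat \<Rightarrow> nat \<Rightarrow> complex" where
  "dev_seq d n p S Z i s =
     (\<Sum>l<d. dft d i l * (complex_of_real (bernoulli_dev p (S (l, s))) * Ghat_adj d n Z l s))
       * complex_of_real (1 / sqrt (real (wt n s)))"

definition dev_fourier ::
    "nat \<Rightarrow> nat \<Rightarrow> real \<Rightarrow> (nat \<times> nat \<Rightarrow> bool) \<Rightarrow> (nat \<Rightarrow> nat \<Rightarrow> complex) \<Rightarrow> nat \<Rightarrow> nat \<Rightarrow> complex" where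
  "dev_fourier d n p S Z i t = (\<Sum>s<n. dev_seq d n p S Z i s * fourier_kernel n t s)"

lemma hankel_eq: "j + k < n \<Longrightarrow> hankel n x j k = x (j + k) * complex_of_real (1 / sqrt (real (wt n (j + k))))"
  unfolding hankel_def Gmat_def by (simp add: if_distrib cong: if_cong)

lemma Ghat_block:
  assumes "odd n" "j < hn n" "k < hn n"
  shows "Ghat d n X (i * hn n + j) (i' * hn n + k)
     = (if i = i' then (\<Sum>l<d. dft d i l * X l (j + k)) * complex_of_real (1 / sqrt (real (wt n (j + k))))
        else 0)"
proof -
  have "j + k < n" using assms odd_eq_2_hn_minus_1[OF assms(1)] by linarith
  then show ?thesis unfolding Ghat_def using assms by (simp add: hankel_eq)
qed

lemma deviation_block:
  assumes "odd n" "j < hn n" "k < hn n"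
  shows "deviation d n p S Z (i * hn n + j) (i' * hn n + k) = (if i = i' then dev_seq d n p S Z i (j + k) else 0)"
proof (cases "i = i'")
  case True
  have dev: "complex_of_real (1 / p) * (\<Sum>l<d. dft d i l * P_Omega S (Ghat_adj d n Z) l s)
        - (\<Sum>l<d. dft d i l * Ghat_adj d n Z l s)
      = (\<Sum>l<d. dft d i l * (complex_of_real (bernoulli_dev p (S (l, s))) * Ghat_adj d n Z l s))" for s
    unfolding sum_distrib_left sum_subtractf[symmetric]
    by (intro sum.cong refl) (auto simp: P_Omega_def bernoulli_dev_def algebra_simps of_real_diff divide_inverse)
  have factor: "(a::complex) * (b * w) - c * w = (a * b - c) * w" for a b c w
    by (simp add: algebra_simps)
  show ?thesis
    unfolding deviation_def Ghat_block[OF assms] dev_seq_def if_P[OF True] factor dev ..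
qed (simp add: deviation_def Ghat_block[OF assms])

lemma deviation_mult_block_row:
  assumes n: "odd n" and i: "i < d" and j: "j < hn n"
  shows "(\<Sum>c<d * hn n. deviation d n p S Z (i * hn n + j) c * v c)
       = (\<Sum>k<hn n. dev_seq d n p S Z i (j + k) * v (i * hn n + k))"
proof -
  have "(\<Sum>c<d * hn n. deviation d n p S Z (i * hn n + j) c * v c)
      = (\<Sum>i'<d. \<Sum>k<hn n. deviation d n p S Z (i * hn n + j) (i' * hn n + k) * v (i' * hn n + k))"
    by (rule sum_block_decomp)
  also have "\<dots> = (\<Sum>i'<d. if i = i' then (\<Sum>k<hn n. dev_seq d n p S Z i (j + k) * v (i * hn n + k)) else 0)"
    using n j by (intro sum.cong refl) (auto simp: deviation_block)
  finally show ?thesis using i by simp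
qed

lemma spec_norm_deviation_le:
  assumes n: "odd n" and M: "0 \<le> M"
    and fourier: "\<And>i t. i < d \<Longrightarrow> t < n \<Longrightarrow> cmod (dev_fourier d n p S Z i t) \<le> M"
  shows "spec_norm (d * hn n) (d * hn n) (deviation d n p S Z) \<le> M"
proof (rule spec_norm_le[OF M])
  fix v
  let ?m = "hn n"
  have "(\<Sum>r<d * ?m. (cmod (\<Sum>c<d * ?m. deviation d n p S Z r c * v c))\<^sup>2)
      = (\<Sum>i<d. \<Sum>j<?m. (cmod (\<Sum>k<?m. dev_seq d n p S Z i (j + k) * v (i * ?m + k)))\<^sup>2)"
    using n by (subst sum_block_decomp) (simp add: deviation_mult_block_row)
  also have "\<dots> \<le> (\<Sum>i<d. M\<^sup>2 * (\<Sum>k<?m. (cmod (v (i * ?m + k)))\<^sup>2))"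
    using fourier hn_pos[OF n] odd_eq_2_hn_minus_1[OF n]
    by (intro sum_mono hankel_sum_sq_le) (auto simp: dev_fourier_def)
  also have "\<dots> = M\<^sup>2 * (\<Sum>c<d * ?m. (cmod (v c))\<^sup>2)"
    by (simp add: sum_distrib_left sum_block_decomp)
  finally show "(\<Sum>r<d * ?m. (cmod (\<Sum>c<d * ?m. deviation d n p S Z r c * v c))\<^sup>2)
      \<le> M\<^sup>2 * (\<Sum>c<d * ?m. (cmod (v c))\<^sup>2)" .
qed

definition fourier_term :: "nat \<Rightarrow> nat \<Rightarrow> (nat \<Rightarrow> nat \<Rightarrow> complex) \<Rightarrow> nat \<Rightarrow> nat \<Rightarrow> nat \<times> nat \<Rightarrow> complex" where
  "fourier_term d n Z i t x = (case x of (l, s) \<Rightarrow>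
     Ghat_adj d n Z l s * dft d i l * complex_of_real (1 / sqrt (real (wt n s))) * fourier_kernel n t s)"

lemma dev_fourier_eq_sum:
  "dev_fourier d n p S Z i t
   = (\<Sum>x\<in>{..<d} \<times> {..<n}. complex_of_real (bernoulli_dev p (S x)) * fourier_term d n Z i t x)"
proof -
  have "dev_fourier d n p S Z i t
      = (\<Sum>s<n. \<Sum>l<d. complex_of_real (bernoulli_dev p (S (l, s))) * fourier_term d n Z i t (l, s))"
    unfolding dev_fourier_def dev_seq_def fourier_term_def
    by (intro sum.cong refl) (simp add: sum_distrib_left sum_distrib_right sum_divide_distrib mult_ac)
  also have "\<dots> = (\<Sum>x\<in>{..<d} \<times> {..<n}. complex_of_real (bernoulli_dev p (S x)) * fourier_term d n Z i t x)"
    by (subst sum.swap) (simp add: sum.cartesian_product case_prod_unfold)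
  finally show ?thesis .
qed

lemma Re_mult_dev_fourier:
  "Re (w * dev_fourier d n p S Z i t)
   = (\<Sum>x\<in>{..<d} \<times> {..<n}. bernoulli_dev p (S x) * Re (w * fourier_term d n Z i t x))"
  unfolding dev_fourier_eq_sum sum_distrib_left Re_sum
  by (intro sum.cong refl) (simp add: algebra_simps)

lemma Ghat_basis_block:
  assumes "odd n" "j < hn n" "k < hn n" "l < d" "s < n"
  shows "Ghat_basis d n l s (i * hn n + j) (i' * hn n + k) = (if i = i' then dft d i l * Gmat n s j k else 0)"
  unfolding Ghat_basis_def Ghat_block[OF assms(1-3)] Gmat_def using assms
  by (auto simp: if_distrib cong: if_cong)

lemma cnj_Gmat [simp]: "cnj (Gmat n s j k) = Gmat n s j k"
  by (simp add: Gmat_def)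

lemma Ghat_adj_eq_mat_inner_basis:
  assumes n: "odd n" and l: "l < d" and s: "s < n"
  shows "Ghat_adj d n Z l s = mat_inner (d * hn n) (d * hn n) Z (Ghat_basis d n l s)"
proof -
  let ?m = "hn n"
  have "mat_inner (d * ?m) (d * ?m) Z (Ghat_basis d n l s)
      = (\<Sum>i<d. \<Sum>j<?m. \<Sum>i'<d. \<Sum>k<?m.
           Z (i * ?m + j) (i' * ?m + k) * cnj (Ghat_basis d n l s (i * ?m + j) (i' * ?m + k)))"
    unfolding mat_inner_def sum_block_decomp ..
  also have "\<dots> = (\<Sum>i<d. \<Sum>j<?m. \<Sum>i'<d. if i = i' then
           (\<Sum>k<?m. Z (i * ?m + j) (i * ?m + k) * (cnj (dft d i l) * Gmat n s j k)) else 0)"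
    using n l s by (intro sum.cong refl) (auto simp: Ghat_basis_block)
  also have "\<dots> = Ghat_adj d n Z l s"
    unfolding Ghat_adj_def by (simp add: sum_distrib_left mult_ac)
  finally show ?thesis by simp
qed

lemma cmod_fourier_term:
  assumes n: "odd n" and l: "l < d" and s: "s < n"
  shows "cmod (fourier_term d n Z i t (l, s)) = coef d n Z l s"
  using l unfolding fourier_term_def coef_def Ghat_adj_eq_mat_inner_basis[OF n l s, symmetric]
  by (simp add: norm_mult norm_divide dft_def real_sqrt_mult fourier_kernel_def)

lemma coef_le_normGinf:
  assumes "l < d" "s < n"
  shows "coef d n Z l s \<le> normGinf d n Z"
proof -
  have "finite {coef d n Z l s | l s. l < d \<and> s < n}"
    by (rule finite_subset[of _ "(\<lambda>(l, s). coef d n Z l s) ` ({..<d} \<times> {..<n})"]) auto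
  then show ?thesis unfolding normGinf_def by (rule Max_ge) (use assms in blast)
qed

lemma normGinf_nonneg: "0 < d \<Longrightarrow> 0 < n \<Longrightarrow> 0 \<le> normGinf d n Z"
  using coef_le_normGinf[of 0 d 0 n Z] by (simp add: coef_def order_trans[OF _ coef_le_normGinf])

lemma normGF_nonneg: "0 \<le> normGF d n Z"
  unfolding normGF_def by (simp add: sum_nonneg)

lemma sum_coef_sq_eq_normGF_sq:
  "(\<Sum>x\<in>{..<d} \<times> {..<n}. (case x of (l, s) \<Rightarrow> coef d n Z l s)\<^sup>2) = (normGF d n Z)\<^sup>2"
  unfolding normGF_def sum.cartesian_product by (simp add: sum_nonneg case_prod_unfold)

lemma prob_Re_mult_dev_fourier_gt:
  assumes d: "0 < d" and n: "odd n" and p: "0 < p" "p \<le> 1" and w: "cmod w = 1" and L: "0 < L"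
    and tau_var: "2 * sqrt (L / p) * normGF d n Z \<le> \<tau>"
    and tau_range: "2 * L * normGinf d n Z / p \<le> \<tau>"
  shows "measure_pmf.prob (bernoulli_model d n p) {S. \<tau> < Re (w * dev_fourier d n p S Z i t)} \<le> exp (- L)"
proof -
  define I where "I = {..<d} \<times> {..<n}"
  define beta where "beta x = Re (w * fourier_term d n Z i t x)" for x
  have beta_le: "\<bar>beta x\<bar> \<le> (case x of (l, s) \<Rightarrow> coef d n Z l s)" if x: "x \<in> I" for x
  proof -
    obtain l s where x: "x = (l, s)" "l < d" "s < n" using x unfolding I_def by auto
    have "\<bar>beta x\<bar> \<le> cmod (w * fourier_term d n Z i t x)"
      unfolding beta_def by (rule abs_Re_le_cmod)
    then show ?thesis using w x cmod_fourier_term[OF n x(2,3)] by (simp add: norm_mult)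
  qed
  have range: "\<bar>beta x\<bar> \<le> normGinf d n Z" if x: "x \<in> I" for x
  proof -
    obtain l s where "x = (l, s)" "l < d" "s < n" using x unfolding I_def by auto
    then show ?thesis using beta_le[OF x] coef_le_normGinf[of l d s n Z] by simp
  qed
  have "(\<Sum>x\<in>I. (beta x)\<^sup>2) \<le> (\<Sum>x\<in>I. (case x of (l, s) \<Rightarrow> coef d n Z l s)\<^sup>2)"
    using beta_le by (intro sum_mono) (metis abs_ge_zero power2_abs power_mono)
  then have "(\<Sum>x\<in>I. (beta x)\<^sup>2) \<le> (normGF d n Z)\<^sup>2"
    unfolding I_def sum_coef_sq_eq_normGF_sq .
  then have "2 * sqrt (L * (\<Sum>x\<in>I. (beta x)\<^sup>2) / p) \<le> 2 * sqrt (L * (normGF d n Z)\<^sup>2 / p)"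
    using L p by (simp add: divide_right_mono)
  also have "\<dots> = 2 * sqrt (L / p) * normGF d n Z"
    by (simp add: real_sqrt_mult real_sqrt_divide normGF_nonneg)
  finally have var: "2 * sqrt (L * (\<Sum>x\<in>I. (beta x)\<^sup>2) / p) \<le> \<tau>"
    using tau_var by linarith
  have "measure_pmf.prob (Pi_pmf I False (\<lambda>_. bernoulli_pmf p))
      {S. \<tau> < (\<Sum>x\<in>I. bernoulli_dev p (S x) * beta x)} \<le> exp (- L)"
    by (rule bernoulli_dev_sum_tail[OF _ p range normGinf_nonneg L var tau_range])
       (use d odd_pos[OF n] in \<open>auto simp: I_def\<close>)
  then show ?thesis
    unfolding bernoulli_model_def Re_mult_dev_fourier I_def beta_def .
qed

definition quarter_turns :: "complex set" where
  "quarter_turns = {1, -1, \<i>, -\<i>}"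

lemma card_quarter_turns: "card quarter_turns = 4"
  by (simp add: quarter_turns_def complex_eq_iff)

lemma cmod_quarter_turn: "w \<in> quarter_turns \<Longrightarrow> cmod w = 1"
  by (auto simp: quarter_turns_def)

lemma cmod_le_of_Re_quarter_turns:
  assumes "\<And>w. w \<in> quarter_turns \<Longrightarrow> Re (w * z) \<le> \<tau>"
  shows "cmod z \<le> 2 * \<tau>"
proof -
  have "\<bar>Re z\<bar> \<le> \<tau>" using assms[of 1] assms[of "-1"] by (auto simp: quarter_turns_def)
  moreover have "\<bar>Im z\<bar> \<le> \<tau>" using assms[of \<i>] assms[of "-\<i>"] by (auto simp: quarter_turns_def)
  ultimately show ?thesis using cmod_le[of z] by linarith
qed

lemma prob_spec_norm_deviation_gt:
  assumes d: "0 < d" and n: "odd n" and p: "0 < p" "p \<le> 1" and L: "0 < L"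
    and tau_var: "2 * sqrt (L / p) * normGF d n Z \<le> \<tau>"
    and tau_range: "2 * L * normGinf d n Z / p \<le> \<tau>"
  shows "measure_pmf.prob (bernoulli_model d n p) {S. 2 * \<tau> < spec_norm (d * hn n) (d * hn n) (deviation d n p S Z)}
           \<le> 4 * real (d * n) * exp (- L)"
proof -
  let ?\<mu> = "bernoulli_model d n p"
  define K where "K = {..<d} \<times> {..<n} \<times> quarter_turns"
  define bad where "bad = (\<lambda>(i, t, w). {S. \<tau> < Re (w * dev_fourier d n p S Z i t)})"
  have "0 \<le> \<tau>"
    using tau_range L p normGinf_nonneg[OF d odd_pos[OF n]] by (smt (verit) divide_nonneg_pos mult_nonneg_nonneg)
  have "S \<in> (\<Union>k\<in>K. bad k)" if S: "2 * \<tau> < spec_norm (d * hn n) (d * hn n) (deviation d n p S Z)" for S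
  proof (rule ccontr)
    assume "S \<notin> (\<Union>k\<in>K. bad k)"
    then have "Re (w * dev_fourier d n p S Z i t) \<le> \<tau>" if "i < d" "t < n" "w \<in> quarter_turns" for i t w
      using that unfolding K_def bad_def by force
    then have "spec_norm (d * hn n) (d * hn n) (deviation d n p S Z) \<le> 2 * \<tau>"
      using \<open>0 \<le> \<tau>\<close> by (intro spec_norm_deviation_le[OF n] cmod_le_of_Re_quarter_turns) auto
    then show False using S by simp
  qed
  then have "{S. 2 * \<tau> < spec_norm (d * hn n) (d * hn n) (deviation d n p S Z)} \<subseteq> (\<Union>k\<in>K. bad k)"
    by blast
  then have "measure_pmf.prob ?\<mu> {S. 2 * \<tau> < spec_norm (d * hn n) (d * hn n) (deviation d n p S Z)}
      \<le> measure_pmf.prob ?\<mu> (\<Union>k\<in>K. bad k)"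
    by (rule measure_pmf.finite_measure_mono) simp
  also have "\<dots> \<le> (\<Sum>k\<in>K. measure_pmf.prob ?\<mu> (bad k))"
    by (rule measure_pmf.finite_measure_subadditive_finite) (auto simp: K_def quarter_turns_def)
  also have "\<dots> \<le> (\<Sum>k\<in>K. exp (- L))"
    unfolding K_def bad_def
    by (intro sum_mono) (clarify, rule prob_Re_mult_dev_fourier_gt[OF d n p cmod_quarter_turn L tau_var tau_range], simp)
  also have "\<dots> = 4 * real (d * n) * exp (- L)"
    by (simp add: K_def card_cartesian_product card_quarter_turns)
  finally show ?thesis .
qed

lemma spec_norm_deviation_tail:
  fixes d n :: nat and p :: real
  assumes d: "1 \<le> d" and n: "odd n" and p: "0 < p" "p \<le> 1"
  shows "measure_pmf.prob (bernoulli_model d n p)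
       {S. spec_norm (d * hn n) (d * hn n) (deviation d n p S Z)
           \<le> 8 * (sqrt (ln (real (d * n)) / p) * normGF d n Z
                  + ln (real (d * n)) / p * normGinf d n Z)}
     \<ge> 1 - 4 * real (d * n) powr (- 1)"
proof -
  define N where "N = real (d * n)"
  define \<tau> where "\<tau> = 4 * (sqrt (ln N / p) * normGF d n Z + ln N / p * normGinf d n Z)"
  define G where "G = {S. spec_norm (d * hn n) (d * hn n) (deviation d n p S Z) \<le> 2 * \<tau>}"
  have "1 * 1 \<le> d * n" using d odd_pos[OF n] by (intro mult_le_mono) auto
  then have "1 \<le> N" unfolding N_def by (metis mult_1 of_nat_1 of_nat_le_iff)
  moreover have "1 - 4 * N powr (- 1) \<le> measure_pmf.prob (bernoulli_model d n p) G" if N: "1 < N"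
  proof -
    define L where "L = 2 * ln N"
    have ln_N: "0 < ln N" and L: "0 < L" using N by (simp_all add: L_def)
    have "2 * sqrt (L / p) = 2 * sqrt 2 * sqrt (ln N / p)"
      by (simp add: L_def real_sqrt_mult[symmetric])
    also have "\<dots> \<le> 4 * sqrt (ln N / p)"
      using sqrt2_less_2 ln_N p by (intro mult_right_mono) auto
    finally have "2 * sqrt (L / p) * normGF d n Z \<le> 4 * sqrt (ln N / p) * normGF d n Z"
      by (rule mult_right_mono[OF _ normGF_nonneg])
    also have "\<dots> \<le> \<tau>"
      unfolding \<tau>_def using normGinf_nonneg[of d n Z] d odd_pos[OF n] ln_N p by simp
    finally have tau_var: "2 * sqrt (L / p) * normGF d n Z \<le> \<tau>" .
    have "0 \<le> sqrt (ln N / p) * normGF d n Z"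
      using ln_N p normGF_nonneg by simp
    then have tau_range: "2 * L * normGinf d n Z / p \<le> \<tau>"
      unfolding \<tau>_def L_def by simp
    have "exp L = N * N"
      using N unfolding L_def mult_2 exp_add by simp
    then have "4 * N * exp (- L) = 4 * N powr (- 1)"
      using N by (simp add: exp_minus powr_neg_one field_simps)
    moreover have "UNIV - G = {S. 2 * \<tau> < spec_norm (d * hn n) (d * hn n) (deviation d n p S Z)}"
      unfolding G_def by auto
    ultimately have "measure_pmf.prob (bernoulli_model d n p) (UNIV - G) \<le> 4 * N powr (- 1)"
      using prob_spec_norm_deviation_gt[OF _ n p L tau_var tau_range] d unfolding N_def by simp
    then show ?thesis
      using measure_pmf.prob_compl[of G "bernoulli_model d n p"] by simp
  qed
  moreover have "1 - 4 * N powr (- 1) \<le> measure_pmf.prob (bernoulli_model d n p) G" if "N = 1"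
    using that by (simp add: order_trans[OF _ measure_nonneg])
  ultimately have "1 - 4 * N powr (- 1) \<le> measure_pmf.prob (bernoulli_model d n p) G"
    by fastforce
  then show ?thesis unfolding G_def \<tau>_def N_def by simp
qed

theorem lemma4p3:
  shows "\<exists>C > 0. \<exists>c1 > 0. \<exists>c2 > 0. \<forall>d n p Z.
     d \<ge> 1 \<longrightarrow> odd n \<longrightarrow> 0 < p \<longrightarrow> p \<le> 1 \<longrightarrow> block_diag d n Z \<longrightarrow>
     measure_pmf.prob (bernoulli_model d n p)
       {S. spec_norm (d * hn n) (d * hn n) (deviation d n p S Z)
           \<le> C * (sqrt (ln (real (d * n)) / p) * normGF d n Z
                  + ln (real (d * n)) / p * normGinf d n Z)}
     \<ge> 1 - c1 * real (d * n) powr (- c2)"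
proof -
  have "\<forall>d n p Z. d \<ge> 1 \<longrightarrow> odd n \<longrightarrow> 0 < p \<longrightarrow> p \<le> 1 \<longrightarrow> block_diag d n Z \<longrightarrow>
     measure_pmf.prob (bernoulli_model d n p)
       {S. spec_norm (d * hn n) (d * hn n) (deviation d n p S Z)
           \<le> 8 * (sqrt (ln (real (d * n)) / p) * normGF d n Z
                  + ln (real (d * n)) / p * normGinf d n Z)}
     \<ge> 1 - 4 * real (d * n) powr (- 1)"
    using spec_norm_deviation_tail by blast
  moreover have "(8 :: real) > 0" "(4 :: real) > 0" "(1 :: real) > 0" by simp_all
  ultimately show ?thesis by blast
qed

end
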